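(* Let $G$ be a connected graph associated with a succinct representation $\mathcal{G}=(H,\{(\ell_i,S_i)\mid 1\le i\le r\})$ where $H$ consists of a single vertex $v$. Then $\mathcal{I}(G)\ge \sum_{i=1}^r\gamma(\ell_i)+\sum_{i=1}^r(\ell_i \bmod 2)$, where $\gamma(\ell)=\ell^2/2$ if $\ell$ is even and $\gamma(\ell)=(\ell^2-1)/2$ if $\ell$ is odd.
   Context: All graphs are finite, simple and undirected. For an ordering $\sigma$ of $V(G)$ and $u\in V(G)$, $N_L(u,\sigma)$ and $N_R(u,\sigma)$ are the sets of neighbours of $u$ preceding and following $u$; $\mathcal{I}(u,\sigma)=\big||N_L(u,\sigma)|-|N_R(u,\sigma)|\big|$, $\mathcal{I}(\sigma)=\sum_u\mathcal{I}(u,\sigma)$, and $\mathcal{I}(G)=\min_\sigma\mathcal{I}(\sigma)$. A succinct representation is a tuple $(H,\{(\ell_i,S_i)\mid 1\le i\le r\})$ where $H$ is a graph, each $\ell_i$ is a positive integer and $S_i\subseteq V(H)$; its associated graph $G$ has vertex set $V(H)\cup C_1\cup\dots\cup C_r$ (pairwise disjoint, $|C_i|=\ell_i$), with edges: those of $H$ on $V(H)$, all edges within each $C_i$, no edges between distinct $C_i$'s, and $w\in V(H)$ adjacent to every vertex of $C_i$ iff $w\in S_i$ (and to none otherwise). *)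

theory Defs
  imports Main
begin

definition simple_graph :: "'a set \<Rightarrow> ('a \<Rightarrow> 'a \<Rightarrow> bool) \<Rightarrow> bool" where
  "simple_graph V E \<longleftrightarrow> finite V \<and> (\<forall>x y. E x y \<longrightarrow> E y x) \<and> (\<forall>x. \<not> E x x)
     \<and> (\<forall>x y. E x y \<longrightarrow> x \<in> V \<and> y \<in> V)"

definition graph_connected :: "'a set \<Rightarrow> ('a \<Rightarrow> 'a \<Rightarrow> bool) \<Rightarrow> bool" where
  "graph_connected V E \<longleftrightarrow>
     (\<forall>u\<in>V. \<forall>w\<in>V. (\<lambda>x y. x \<in> V \<and> y \<in> V \<and> E x y)\<^sup>*\<^sup>* u w)"

definition pos :: "'a list \<Rightarrow> 'a \<Rightarrow> nat" where
  "pos xs u = (LEAST k. k < length xs \<and> xs ! k = u)"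

definition orderings :: "'a set \<Rightarrow> 'a list set" where
  "orderings V = {xs. distinct xs \<and> set xs = V}"

definition left_nbrs :: "('a \<Rightarrow> 'a \<Rightarrow> bool) \<Rightarrow> 'a list \<Rightarrow> 'a \<Rightarrow> 'a set" where
  "left_nbrs E xs u = {w \<in> set xs. E u w \<and> pos xs w < pos xs u}"

definition right_nbrs :: "('a \<Rightarrow> 'a \<Rightarrow> bool) \<Rightarrow> 'a list \<Rightarrow> 'a \<Rightarrow> 'a set" where
  "right_nbrs E xs u = {w \<in> set xs. E u w \<and> pos xs u < pos xs w}"

definition vertex_imbalance :: "('a \<Rightarrow> 'a \<Rightarrow> bool) \<Rightarrow> 'a list \<Rightarrow> 'a \<Rightarrow> nat" where
  "vertex_imbalance E xs u =
     nat \<bar>int (card (left_nbrs E xs u)) - int (card (right_nbrs E xs u))\<bar>"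

definition ordering_imbalance :: "('a \<Rightarrow> 'a \<Rightarrow> bool) \<Rightarrow> 'a list \<Rightarrow> nat" where
  "ordering_imbalance E xs = (\<Sum>u\<in>set xs. vertex_imbalance E xs u)"

definition graph_imbalance :: "'a set \<Rightarrow> ('a \<Rightarrow> 'a \<Rightarrow> bool) \<Rightarrow> nat" where
  "graph_imbalance V E = Min (ordering_imbalance E ` orderings V)"

text \<open>Succinct representation: graph H = (VH, EH) and a list of pairs (l_i, S_i), i = 1..r
  stored at list positions 0..r-1.  Associated graph on Inl ` VH \<union> clique vertices Inr (i,j), j < l_i.\<close>
definition succinct_valid :: "'a set \<Rightarrow> ('a \<Rightarrow> 'a \<Rightarrow> bool) \<Rightarrow> (nat \<times> 'a set) list \<Rightarrow> bool" where
  "succinct_valid VH EH reps \<longleftrightarrow> simple_graph VH EH \<and>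
     (\<forall>i < length reps. 0 < fst (reps ! i) \<and> snd (reps ! i) \<subseteq> VH)"

definition assoc_vertices :: "'a set \<Rightarrow> (nat \<times> 'a set) list \<Rightarrow> ('a + nat \<times> nat) set" where
  "assoc_vertices VH reps =
     Inl ` VH \<union> {Inr (i, j) | i j. i < length reps \<and> j < fst (reps ! i)}"

fun assoc_edge :: "('a \<Rightarrow> 'a \<Rightarrow> bool) \<Rightarrow> (nat \<times> 'a set) list \<Rightarrow> ('a + nat \<times> nat) \<Rightarrow> ('a + nat \<times> nat) \<Rightarrow> bool" where
  "assoc_edge EH reps (Inl a) (Inl b) = EH a b"
| "assoc_edge EH reps (Inr (i, j)) (Inr (i', j')) = (i = i' \<and> j \<noteq> j' \<and> i < length reps
      \<and> j < fst (reps ! i) \<and> j' < fst (reps ! i))"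
| "assoc_edge EH reps (Inl a) (Inr (i, j)) = (i < length reps \<and> j < fst (reps ! i) \<and> a \<in> snd (reps ! i))"
| "assoc_edge EH reps (Inr (i, j)) (Inl a) = (i < length reps \<and> j < fst (reps ! i) \<and> a \<in> snd (reps ! i))"

definition gamma :: "nat \<Rightarrow> nat" where
  "gamma l = (if even l then l^2 div 2 else (l^2 - 1) div 2)"

end

theory Submission
  imports Defs
begin

(* Connectivity forces every clique C_i to be attached to v, so C_i \<union> {v} is a clique on l_i + 1
   vertices in which the vertices of C_i have no further neighbours.  In any ordering the vertex of
   rank k in this clique has imbalance |2k - l_i|; these values sum to (l_i^2 + 2 l_i + (l_i mod 2))/2
   over all ranks, and discarding the term of v, which is at most l_i, leaves at least
   gamma(l_i) + (l_i mod 2).  The cliques are disjoint, so the bounds add up. *)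

lemma pos_in_set:
  assumes "u \<in> set xs"
  shows "pos xs u < length xs \<and> xs ! pos xs u = u"
proof -
  obtain k where "k < length xs \<and> xs ! k = u"
    using assms by (meson in_set_conv_nth)
  then show ?thesis
    unfolding pos_def by (rule LeastI)
qed

lemma inj_on_pos: "inj_on (pos xs) (set xs)"
  by (metis inj_onI pos_in_set)

definition rank :: "('b \<Rightarrow> nat) \<Rightarrow> 'b set \<Rightarrow> 'b \<Rightarrow> nat" where
  "rank p K u = card {w \<in> K. p w < p u}"

lemma rank_less_card:
  assumes "finite K" "u \<in> K"
  shows "rank p K u < card K"
  unfolding rank_def using assms by (intro psubset_card_mono) auto

lemma rank_strict_mono:
  assumes "finite K" "u \<in> K" "p u < p w"
  shows "rank p K u < rank p K w"
  unfolding rank_def using assms by (intro psubset_card_mono) auto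

lemma bij_betw_rank:
  assumes "finite K" "inj_on p K"
  shows "bij_betw (rank p K) K {..<card K}"
proof -
  have inj: "inj_on (rank p K) K"
  proof (rule inj_onI)
    fix u w assume "u \<in> K" "w \<in> K" "rank p K u = rank p K w"
    then show "u = w"
      using assms rank_strict_mono[of K _ p] inj_onD[OF assms(2)]
      by (metis less_irrefl linorder_neqE_nat)
  qed
  have "rank p K ` K = {..<card K}"
    using assms(1) rank_less_card[OF assms(1)] card_image[OF inj]
    by (intro card_subset_eq) auto
  then show ?thesis
    using inj by (simp add: bij_betw_def)
qed

lemma rank_add_card_greater:
  assumes "finite K" "inj_on p K" "u \<in> K"
  shows "rank p K u + card {w \<in> K. p u < p w} = card K - 1"
proof -
  have "p w \<noteq> p u" if "w \<in> K" "w \<noteq> u" for w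
    using assms(2,3) that by (meson inj_onD)
  then have "K - {u} = {w \<in> K. p w < p u} \<union> {w \<in> K. p u < p w}"
    by fastforce
  then have "card (K - {u}) = rank p K u + card {w \<in> K. p u < p w}"
    unfolding rank_def using assms(1) by (simp add: card_Un_disjoint disjoint_iff)
  then show ?thesis
    using assms by simp
qed

lemma sum_abs_double_minus:
  "2 * (\<Sum>k<Suc l. \<bar>2 * int k - int l\<bar>) = int l ^ 2 + 2 * int l + int (l mod 2)"
proof (induction l rule: nat_induct2)
  case (step l)
  have "(\<Sum>k<Suc (l + 2). \<bar>2 * int k - int (l + 2)\<bar>)
        = int (l + 2) + (\<Sum>k<Suc (Suc l). \<bar>2 * int k - int l\<bar>)"
    by (subst sum.lessThan_Suc_shift) (simp add: algebra_simps)
  also have "\<dots> = (\<Sum>k<Suc l. \<bar>2 * int k - int l\<bar>) + 2 * int l + 4"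
    by simp
  finally show ?case
    using step by (simp add: power2_eq_square algebra_simps)
qed simp_all

lemma double_gamma_add_mod: "2 * gamma l + l mod 2 = l ^ 2"
proof (cases "even l")
  case True
  then show ?thesis by (auto simp: gamma_def power2_eq_square)
next
  case False
  then obtain m where "l = 2 * m + 1" using oddE by blast
  moreover have "l mod 2 = 1" using False by presburger
  ultimately show ?thesis by (simp add: gamma_def power2_eq_square algebra_simps)
qed

lemma vertex_imbalance_clique_member:
  assumes "finite K" "K \<subseteq> set xs" "card K = Suc l" "u \<in> K"
    and nbrs: "\<And>w. w \<in> set xs \<Longrightarrow> E u w \<longleftrightarrow> w \<in> K \<and> w \<noteq> u"
  shows "int (vertex_imbalance E xs u) = \<bar>2 * int (rank (pos xs) K u) - int l\<bar>"
proof -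
  have "left_nbrs E xs u = {w \<in> K. pos xs w < pos xs u}"
    and "right_nbrs E xs u = {w \<in> K. pos xs u < pos xs w}"
    unfolding left_nbrs_def right_nbrs_def using nbrs assms(2) by auto
  moreover have "rank (pos xs) K u + card {w \<in> K. pos xs u < pos xs w} = l"
    using rank_add_card_greater[OF assms(1) inj_on_subset[OF inj_on_pos assms(2)] assms(4)]
      assms(3) by simp
  ultimately show ?thesis
    unfolding vertex_imbalance_def rank_def by simp
qed

lemma clique_imbalance_lower_bound:
  assumes K: "finite K" "K \<subseteq> set xs" "card K = Suc l" and "a \<in> K"
    and nbrs: "\<And>u w. u \<in> K - {a} \<Longrightarrow> w \<in> set xs \<Longrightarrow> E u w \<longleftrightarrow> w \<in> K \<and> w \<noteq> u"
  shows "gamma l + l mod 2 \<le> (\<Sum>u \<in> K - {a}. vertex_imbalance E xs u)"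
proof -
  define f where "f u = \<bar>2 * int (rank (pos xs) K u) - int l\<bar>" for u
  have "(\<Sum>k<Suc l. \<bar>2 * int k - int l\<bar>) = (\<Sum>u\<in>K. f u)"
    unfolding f_def using sum.reindex_bij_betw[OF bij_betw_rank[OF K(1)
        inj_on_subset[OF inj_on_pos K(2)]], of "\<lambda>k. \<bar>2 * int k - int l\<bar>"] K(3)
    by simp
  also have "\<dots> = f a + (\<Sum>u \<in> K - {a}. f u)"
    using K(1) \<open>a \<in> K\<close> by (simp add: sum.remove)
  also have "f a \<le> int l"
    unfolding f_def using rank_less_card[OF K(1) \<open>a \<in> K\<close>, of "pos xs"] K(3) by simp
  also have "(\<Sum>u \<in> K - {a}. f u) = int (\<Sum>u \<in> K - {a}. vertex_imbalance E xs u)"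
    unfolding f_def of_nat_sum using vertex_imbalance_clique_member[OF K] nbrs
    by (intro sum.cong) auto
  finally have "int l ^ 2 + int (l mod 2) \<le> 2 * int (\<Sum>u \<in> K - {a}. vertex_imbalance E xs u)"
    using sum_abs_double_minus[of l] by linarith
  moreover have "int l ^ 2 = 2 * int (gamma l) + int (l mod 2)"
    using arg_cong[where f = int, OF double_gamma_add_mod[of l]] by simp
  ultimately show ?thesis
    by linarith
qed

lemma graph_imbalance_lower_bound:
  assumes "finite V" and "\<And>xs. xs \<in> orderings V \<Longrightarrow> b \<le> ordering_imbalance E xs"
  shows "b \<le> graph_imbalance V E"
proof -
  have "finite (orderings V)"
    using finite_subset_distinct[OF assms(1)] by (rule rev_finite_subset) (auto simp: orderings_def)
  moreover have "orderings V \<noteq> {}"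
    using finite_distinct_list[OF assms(1)] by (auto simp: orderings_def)
  ultimately show ?thesis
    unfolding graph_imbalance_def using assms(2) by (subst Min_ge_iff) auto
qed

lemma connected_closed_superset:
  assumes "graph_connected V E" "u \<in> V" "u \<in> C"
    and closed: "\<And>x y. x \<in> C \<Longrightarrow> y \<in> V \<Longrightarrow> E x y \<Longrightarrow> y \<in> C"
  shows "V \<subseteq> C"
proof
  fix w assume "w \<in> V"
  then have "(\<lambda>x y. x \<in> V \<and> y \<in> V \<and> E x y)\<^sup>*\<^sup>* u w"
    using assms(1,2) unfolding graph_connected_def by blast
  then show "w \<in> C"
    by (induction rule: rtranclp_induct) (auto intro: closed assms(3))
qed

definition assoc_clique :: "(nat \<times> 'a set) list \<Rightarrow> nat \<Rightarrow> ('a + nat \<times> nat) set" where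
  "assoc_clique reps i = (\<lambda>j. Inr (i, j)) ` {..<fst (reps ! i)}"

lemma finite_assoc_clique [simp]: "finite (assoc_clique reps i)"
  by (simp add: assoc_clique_def)

lemma card_assoc_clique: "card (assoc_clique reps i) = fst (reps ! i)"
  unfolding assoc_clique_def by (simp add: card_image inj_on_def)

lemma assoc_vertices_eq:
  "assoc_vertices VH reps = Inl ` VH \<union> (\<Union>i<length reps. assoc_clique reps i)"
  unfolding assoc_vertices_def assoc_clique_def by auto

lemma connected_attachment_eq_singleton:
  assumes "succinct_valid {v} EH reps"
    and "graph_connected (assoc_vertices {v} reps) (assoc_edge EH reps)"
    and "i < length reps"
  shows "snd (reps ! i) = {v}"
proof (rule ccontr)
  assume "snd (reps ! i) \<noteq> {v}"
  with assms(1,3) have v: "v \<notin> snd (reps ! i)" and "0 < fst (reps ! i)"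
    unfolding succinct_valid_def by auto
  then have "Inr (i, 0) \<in> assoc_vertices {v} reps \<inter> assoc_clique reps i"
    using assms(3) by (auto simp: assoc_vertices_def assoc_clique_def)
  then have "assoc_vertices {v} reps \<subseteq> assoc_clique reps i"
    using v by (intro connected_closed_superset[OF assms(2), of "Inr (i, 0)"])
      (auto simp: assoc_vertices_def assoc_clique_def)
  then show False
    by (auto simp: assoc_vertices_def assoc_clique_def)
qed

lemma assoc_edge_clique_iff:
  assumes "i < length reps" "snd (reps ! i) = {v}"
    and "u \<in> assoc_clique reps i" "w \<in> assoc_vertices {v} reps"
  shows "assoc_edge EH reps u w \<longleftrightarrow> w \<in> insert (Inl v) (assoc_clique reps i) \<and> w \<noteq> u"
  using assms by (auto simp: assoc_vertices_def assoc_clique_def)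

lemma ordering_imbalance_lower_bound:
  assumes attached: "\<And>i. i < length reps \<Longrightarrow> snd (reps ! i) = {v}"
    and xs: "xs \<in> orderings (assoc_vertices {v} reps)"
  shows "(\<Sum>i<length reps. gamma (fst (reps ! i)) + fst (reps ! i) mod 2)
           \<le> ordering_imbalance (assoc_edge EH reps) xs"
proof -
  let ?f = "vertex_imbalance (assoc_edge EH reps) xs"
  have set_xs: "set xs = assoc_vertices {v} reps"
    using xs by (simp add: orderings_def)
  have "gamma (fst (reps ! i)) + fst (reps ! i) mod 2 \<le> sum ?f (assoc_clique reps i)"
    if i: "i < length reps" for i
  proof -
    let ?K = "insert (Inl v) (assoc_clique reps i)"
    have "Inl v \<notin> assoc_clique reps i"
      by (auto simp: assoc_clique_def)
    moreover have "?K \<subseteq> set xs"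
      using i by (auto simp: set_xs assoc_vertices_eq)
    ultimately have "gamma (fst (reps ! i)) + fst (reps ! i) mod 2 \<le> sum ?f (?K - {Inl v})"
      using assoc_edge_clique_iff[OF i attached[OF i]]
      by (intro clique_imbalance_lower_bound) (auto simp: card_assoc_clique set_xs)
    also have "?K - {Inl v} = assoc_clique reps i"
      using \<open>Inl v \<notin> assoc_clique reps i\<close> by simp
    finally show ?thesis .
  qed
  then have "(\<Sum>i<length reps. gamma (fst (reps ! i)) + fst (reps ! i) mod 2)
             \<le> (\<Sum>i<length reps. sum ?f (assoc_clique reps i))"
    by (intro sum_mono) auto
  also have "\<dots> = sum ?f (\<Union>i<length reps. assoc_clique reps i)"
    by (rule sum.UNION_disjoint[symmetric]) (auto simp: assoc_clique_def)
  also have "\<dots> \<le> sum ?f (set xs)"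
    by (rule sum_mono2) (auto simp: set_xs assoc_vertices_eq)
  finally show ?thesis
    unfolding ordering_imbalance_def .
qed

theorem proposition2:
  fixes v :: 'a and EH :: "'a \<Rightarrow> 'a \<Rightarrow> bool" and reps :: "(nat \<times> 'a set) list"
  assumes "succinct_valid {v} EH reps"
    and "graph_connected (assoc_vertices {v} reps) (assoc_edge EH reps)"
  shows "graph_imbalance (assoc_vertices {v} reps) (assoc_edge EH reps)
           \<ge> (\<Sum>i<length reps. gamma (fst (reps ! i))) + (\<Sum>i<length reps. fst (reps ! i) mod 2)"
proof -
  have "finite (assoc_vertices {v} reps)"
    by (simp add: assoc_vertices_eq)
  moreover note ordering_imbalance_lower_bound[OF connected_attachment_eq_singleton[OF assms]]
  ultimately have "(\<Sum>i<length reps. gamma (fst (reps ! i)) + fst (reps ! i) mod 2)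
                   \<le> graph_imbalance (assoc_vertices {v} reps) (assoc_edge EH reps)"
    by (rule graph_imbalance_lower_bound)
  then show ?thesis
    by (simp add: sum.distrib)
qed

end
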